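(* Let $\xi(t)=(\xi_1(t),\dots,\xi_d(t))$, $t\geq 0$, be a continuous in $t$ stationary $d$-dimensional stochastic process on a probability space $(\Omega,\mathcal{F},P)$ such that $E|\xi(0)|<\infty$. Let $Q=(Q_1,\dots,Q_d)$ be the (in general random) almost sure limit $Q=\lim_{t\to\infty}t^{-1}\int_0^t\xi(s)ds$, which exists by the Birkhoff ergodic theorem. For $\nu\geq1$ and $1\leq i_1,\dots,i_\nu\leq d$ define \[ \Sigma^{i_1,\dots,i_\nu}(t)=\int_{0\leq s_1\leq\dots\leq s_\nu\leq t}\xi_{i_1}(s_1)\cdots\xi_{i_\nu}(s_\nu)\,ds_1\cdots ds_\nu . \] Then with probability one, \[ \lim_{t\to\infty}t^{-\nu}\Sigma^{i_1,\dots,i_\nu}(t)=\frac 1{\nu !}\prod_{j=1}^\nu Q_{i_j} \] for all $1\leq i_1,\dots,i_\nu\leq d$.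
   Context: $|\cdot|$ denotes the Euclidean norm on $\mathbb{R}^d$. *)

theory Defs
  imports "HOL-Probability.Probability"
begin

text \<open>Strict stationarity of a process indexed by t \<ge> 0: for every shift h \<ge> 0 the
law of the shifted path (t \<mapsto> xi (t+h)) on the product sigma-algebra over [0,\<infinity>)
(i.e. all finite-dimensional distributions) coincides with the law of the path.\<close>
definition stationary_process ::
  "'w measure \<Rightarrow> (real \<Rightarrow> 'w \<Rightarrow> 'b::topological_space) \<Rightarrow> bool" where
  "stationary_process M xi \<longleftrightarrow>
     (\<forall>h\<ge>0. distr M (Pi\<^sub>M {0..} (\<lambda>_. borel)) (\<lambda>w. \<lambda>t\<in>{0..}. xi (t + h) w)
           = distr M (Pi\<^sub>M {0..} (\<lambda>_. borel)) (\<lambda>w. \<lambda>t\<in>{0..}. xi t w))"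

text \<open>Iterated integrals, indices given in reverse order (outermost index first).\<close>
fun iter_int_rev :: "(real \<Rightarrow> real ^ 'n) \<Rightarrow> 'n list \<Rightarrow> real \<Rightarrow> real" where
  "iter_int_rev x [] t = 1"
| "iter_int_rev x (i # rs) t = integral {0..t} (\<lambda>s. iter_int_rev x rs s * (x s $ i))"

text \<open>Sigma^{i_1..i_nu}(t) = integral over 0 \<le> s_1 \<le> ... \<le> s_nu \<le> t of
  x_{i_1}(s_1) ... x_{i_nu}(s_nu), written as the iterated integral.\<close>
definition Sigma :: "(real \<Rightarrow> real ^ 'n) \<Rightarrow> 'n list \<Rightarrow> real \<Rightarrow> real" where
  "Sigma x is t = iter_int_rev x (rev is) t"

end

theory Submission
  imports Defs
begin

text \<open>
  Let \<phi> be a coordinate of \<xi> or its absolute value. By stationarity the integrals of \<phi>(\<xi>(s))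
  over the unit intervals [n, n + 1] form a stationary integrable sequence, so by Birkhoff's
  ergodic theorem their Cesaro means converge almost surely. For such a path, the averages
  (1/t) \<integral>[0,t] \<xi> converge to some Q and \<integral>[0,t] |\<xi>_i| grows at most linearly in t; from here on
  the argument is deterministic. If F(t) ~ c t^k then \<integral>[0,t] F \<xi>_i ~ c Q_i t^(k+1) / (k + 1):
  the error F(s) - c s^k is controlled by the linear bound, and \<integral>[0,t] s^k \<xi>_i(s) ds is
  integrated by parts against \<integral>[0,s] \<xi>_i ~ Q_i s. Induction on the number of indices gives the
  limit of the iterated integrals.

  Birkhoff's theorem is proved from Hopf's maximal lemma. With S_n the partial sums, for a < b
  the shift-invariant set on which S_n - a n is unbounded below and S_n - b n unbounded above is
  null, and so are the sets on which S_n - j n is unbounded above (or S_n + j n unbounded below)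
  for every j; off these sets the Cesaro means S_n / n converge.
\<close>

section \<open>Birkhoff's ergodic theorem for stationary sequences\<close>

definition seq_space :: "(nat \<Rightarrow> real) measure" where
  "seq_space = Pi\<^sub>M UNIV (\<lambda>_. borel)"

definition seq_shift :: "(nat \<Rightarrow> real) \<Rightarrow> nat \<Rightarrow> real" where
  "seq_shift y = (\<lambda>n. y (Suc n))"

lemma space_seq_space [simp]: "space seq_space = UNIV"
  by (simp add: seq_space_def space_PiM)

lemma measurable_seq_component [measurable]: "(\<lambda>y. y k) \<in> borel_measurable seq_space"
  unfolding seq_space_def by measurable

lemma measurable_seq_shift [measurable]: "seq_shift \<in> seq_space \<rightarrow>\<^sub>M seq_space"
  unfolding seq_shift_def seq_space_def
  by (rule measurable_PiM_single') (auto simp: space_PiM)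

lemma sum_lessThan_Suc_seq_shift:
  "(\<Sum>k<Suc n. f (y k)) = f (y 0) + (\<Sum>k<n. f (seq_shift y k))"
  unfolding seq_shift_def by (rule sum.lessThan_Suc_shift)

locale stationary_sequence = prob_space nu for nu :: "(nat \<Rightarrow> real) measure" +
  assumes sets_eq [measurable_cong]: "sets nu = sets seq_space"
    and distr_seq_shift: "distr nu seq_space seq_shift = nu"
    and integrable_coordinate_0: "integrable nu (\<lambda>y. y 0)"
begin

lemma measurable_nu_iff: "f \<in> nu \<rightarrow>\<^sub>M N \<longleftrightarrow> f \<in> seq_space \<rightarrow>\<^sub>M N"
  by (simp add: measurable_cong_sets[OF sets_eq refl])

lemma integral_seq_shift:
  fixes g :: "(nat \<Rightarrow> real) \<Rightarrow> real"
  assumes [measurable]: "g \<in> borel_measurable seq_space"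
  shows "(\<integral>y. g (seq_shift y) \<partial>nu) = integral\<^sup>L nu g"
  by (subst (2) distr_seq_shift[symmetric]) (simp add: integral_distr measurable_nu_iff)

lemma integrable_seq_shift:
  fixes g :: "(nat \<Rightarrow> real) \<Rightarrow> real"
  assumes [measurable]: "g \<in> borel_measurable seq_space" and "integrable nu g"
  shows "integrable nu (\<lambda>y. g (seq_shift y))"
  using assms(2) by (subst (asm) distr_seq_shift[symmetric]) (simp add: integrable_distr_eq measurable_nu_iff)

lemma integrable_coordinate: "integrable nu (\<lambda>y. y k)"
proof (induction k)
  case 0
  show ?case by (rule integrable_coordinate_0)
next
  case (Suc k)
  then have "integrable nu (\<lambda>y. seq_shift y k)"
    by (intro integrable_seq_shift[where g = "\<lambda>y. y k"]) auto
  then show ?case by (simp add: seq_shift_def)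
qed

lemma integrable_if_bounded_by_partial_sum:
  assumes "f \<in> borel_measurable seq_space" and "\<And>y. \<bar>f y\<bar> \<le> (\<Sum>j<n. \<bar>a\<bar> * \<bar>y j\<bar> + \<bar>b\<bar>)"
  shows "integrable nu f"
proof (rule Bochner_Integration.integrable_bound)
  show "integrable nu (\<lambda>y. \<Sum>j<n. \<bar>a\<bar> * \<bar>y j\<bar> + \<bar>b\<bar>)"
    using integrable_coordinate by auto
qed (use assms in \<open>auto simp: measurable_nu_iff intro: order.trans[OF _ abs_ge_self]\<close>)

end

lemma abs_affine_le: "\<bar>a * x + b\<bar> \<le> \<bar>a\<bar> * \<bar>x\<bar> + \<bar>b :: real\<bar>"
  by (metis abs_mult abs_triangle_ineq)

definition max_partial_sum :: "real \<Rightarrow> real \<Rightarrow> nat \<Rightarrow> (nat \<Rightarrow> real) \<Rightarrow> real" where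
  "max_partial_sum a b n y = Max ((\<lambda>k. \<Sum>j<k. a * y j + b) ` {..n})"

lemma measurable_max_partial_sum [measurable]:
  "max_partial_sum a b n \<in> borel_measurable seq_space"
  unfolding max_partial_sum_def by measurable

lemma partial_sum_le_max_partial_sum:
  "k \<le> n \<Longrightarrow> (\<Sum>j<k. a * y j + b) \<le> max_partial_sum a b n y"
  unfolding max_partial_sum_def by (rule Max_ge) auto

lemma max_partial_sum_nonneg: "0 \<le> max_partial_sum a b n y"
  using partial_sum_le_max_partial_sum[of 0 n a y b] by simp

lemma max_partial_sum_attained:
  obtains k where "k \<le> n" "max_partial_sum a b n y = (\<Sum>j<k. a * y j + b)"
proof -
  have "max_partial_sum a b n y \<in> (\<lambda>k. \<Sum>j<k. a * y j + b) ` {..n}"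
    unfolding max_partial_sum_def by (rule Max_in) auto
  with that show thesis by auto
qed

lemma abs_max_partial_sum_le: "\<bar>max_partial_sum a b n y\<bar> \<le> (\<Sum>j<n. \<bar>a\<bar> * \<bar>y j\<bar> + \<bar>b\<bar>)"
proof -
  obtain k where k: "k \<le> n" "max_partial_sum a b n y = (\<Sum>j<k. a * y j + b)"
    by (rule max_partial_sum_attained)
  have "\<bar>\<Sum>j<k. a * y j + b\<bar> \<le> (\<Sum>j<k. \<bar>a\<bar> * \<bar>y j\<bar> + \<bar>b\<bar>)"
    by (rule order.trans[OF sum_abs sum_mono]) (rule abs_affine_le)
  also have "\<dots> \<le> (\<Sum>j<n. \<bar>a\<bar> * \<bar>y j\<bar> + \<bar>b\<bar>)"
    by (rule sum_mono2) (use k(1) in auto)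
  finally show ?thesis using k(2) by simp
qed

text \<open>A positive maximum is attained at some k \<ge> 1, where the partial sum is the first term plus
  a partial sum of the shifted sequence.\<close>
lemma max_partial_sum_diff_seq_shift_le:
  "max_partial_sum a b n y - max_partial_sum a b n (seq_shift y)
     \<le> (if 0 < max_partial_sum a b n y then a * y 0 + b else 0)"
proof (cases "0 < max_partial_sum a b n y")
  case True
  obtain k where k: "k \<le> n" "max_partial_sum a b n y = (\<Sum>j<k. a * y j + b)"
    by (rule max_partial_sum_attained)
  with True obtain j where j: "k = Suc j" by (cases k) auto
  have "(\<Sum>i<j. a * seq_shift y i + b) \<le> max_partial_sum a b n (seq_shift y)"
    using k(1) j by (intro partial_sum_le_max_partial_sum) simp
  with True k j show ?thesis
    using sum_lessThan_Suc_seq_shift[where f = "\<lambda>v. a * v + b" and n = j and y = y] by simp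
next
  case False
  then show ?thesis using max_partial_sum_nonneg[of a b n "seq_shift y"] by simp
qed

context stationary_sequence
begin

lemma maximal_ergodic_finite:
  assumes [measurable]: "B \<in> sets seq_space"
    and invariant: "\<And>y. seq_shift y \<in> B \<longleftrightarrow> y \<in> B"
  shows "0 \<le> (\<integral>y. indicator B y * (if 0 < max_partial_sum a b n y then a * y 0 + b else 0) \<partial>nu)"
    (is "0 \<le> integral\<^sup>L nu ?s")
proof -
  let ?M = "\<lambda>y. indicator B y * max_partial_sum a b n y"
  have M_integrable: "integrable nu ?M"
    by (rule integrable_if_bounded_by_partial_sum[where a = a and b = b and n = n])
       (auto simp: indicator_def abs_max_partial_sum_le intro: sum_nonneg)
  have s_integrable: "integrable nu ?s"
    by (rule integrable_if_bounded_by_partial_sum[where a = a and b = b and n = 1])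
       (auto simp: indicator_def abs_affine_le)
  have shift_M: "?M (seq_shift y) = indicator B y * max_partial_sum a b n (seq_shift y)" for y
    using invariant by (simp add: indicator_def)
  have "0 = integral\<^sup>L nu ?M - (\<integral>y. ?M (seq_shift y) \<partial>nu)"
    using integral_seq_shift[of ?M] by simp
  also have "\<dots> = (\<integral>y. ?M y - ?M (seq_shift y) \<partial>nu)"
    using M_integrable integrable_seq_shift[of ?M] by simp
  also have "\<dots> \<le> integral\<^sup>L nu ?s"
  proof (rule integral_mono)
    show "?M y - ?M (seq_shift y) \<le> ?s y" for y
      unfolding shift_M using max_partial_sum_diff_seq_shift_le[of a b n y]
      by (auto simp: indicator_def split: if_splits)
  qed (use M_integrable integrable_seq_shift[of ?M] s_integrable in auto)
  finally show ?thesis .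
qed

lemma maximal_ergodic:
  assumes [measurable]: "B \<in> sets seq_space"
    and invariant: "\<And>y. seq_shift y \<in> B \<longleftrightarrow> y \<in> B"
    and positive: "\<And>y. y \<in> B \<Longrightarrow> \<exists>n. 0 < (\<Sum>k<n. a * y k + b)"
  shows "0 \<le> (\<integral>y. indicator B y * (a * y 0 + b) \<partial>nu)"
proof -
  let ?s = "\<lambda>n y. indicator B y * (if 0 < max_partial_sum a b n y then a * y 0 + b else 0)"
  have "(\<lambda>n. ?s n y) \<longlonglongrightarrow> indicator B y * (a * y 0 + b)" for y
  proof (cases "y \<in> B")
    case True
    then obtain n0 where "0 < (\<Sum>k<n0. a * y k + b)" using positive by blast
    then have "\<forall>\<^sub>F n in sequentially. 0 < max_partial_sum a b n y"
      using partial_sum_le_max_partial_sum[of n0 _ a y b]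
      by (auto simp: eventually_sequentially intro: order.strict_trans2)
    then show ?thesis
      by (rule tendsto_eventually[OF eventually_mono]) simp
  qed simp
  then have "(\<lambda>n. integral\<^sup>L nu (?s n)) \<longlonglongrightarrow> (\<integral>y. indicator B y * (a * y 0 + b) \<partial>nu)"
    by (intro integral_dominated_convergence[where w = "\<lambda>y. \<bar>a\<bar> * \<bar>y 0\<bar> + \<bar>b\<bar>"])
       (use integrable_coordinate_0 in \<open>auto simp: measurable_nu_iff indicator_def abs_affine_le\<close>)
  then show ?thesis
    using maximal_ergodic_finite[OF assms(1,2)] by (intro tendsto_lowerbound) auto
qed

end

text \<open>Unboundedness of S_n - c n is used instead of a condition on lim sup S_n / n because it is
  exactly invariant under the shift, which only adds a constant to the sequence S_n - c n.\<close>
definition drifts_above :: "real \<Rightarrow> (nat \<Rightarrow> real) set" where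
  "drifts_above c = {y. \<not> bdd_above (range (\<lambda>n. (\<Sum>k<n. y k) - c * real n))}"

definition drifts_below :: "real \<Rightarrow> (nat \<Rightarrow> real) set" where
  "drifts_below c = {y. \<not> bdd_below (range (\<lambda>n. (\<Sum>k<n. y k) - c * real n))}"

lemma bdd_above_range_iff_nat: "bdd_above (range f) \<longleftrightarrow> (\<exists>C::nat. \<forall>n. f n \<le> real C)"
proof
  assume "bdd_above (range f)"
  then obtain C where "\<And>n. f n \<le> C" by (auto simp: bdd_above_def)
  then show "\<exists>C::nat. \<forall>n. f n \<le> real C"
    using real_nat_ceiling_ge[of C] by (blast intro: order.trans)
qed (auto simp: bdd_above_def)

lemma measurable_drifts_above [measurable]: "drifts_above c \<in> sets seq_space"
proof -
  have "Measurable.pred seq_space (\<lambda>y. \<not> (\<exists>C::nat. \<forall>n. (\<Sum>k<n. y k) - c * real n \<le> real C))"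
    by measurable
  then show ?thesis by (simp add: pred_def drifts_above_def bdd_above_range_iff_nat)
qed

lemma measurable_drifts_below [measurable]: "drifts_below c \<in> sets seq_space"
proof -
  have "Measurable.pred seq_space (\<lambda>y. \<not> (\<exists>C::nat. \<forall>n. c * real n - (\<Sum>k<n. y k) \<le> real C))"
    by measurable
  then show ?thesis
    by (simp add: pred_def drifts_below_def bdd_above_range_iff_nat bdd_above_uminus_image[symmetric])
qed

lemma bdd_above_range_Suc_iff:
  fixes f :: "nat \<Rightarrow> real"
  shows "bdd_above (range (\<lambda>n. f (Suc n))) \<longleftrightarrow> bdd_above (range f)"
proof
  assume "bdd_above (range (\<lambda>n. f (Suc n)))"
  then have "bdd_above (insert (f 0) (range (\<lambda>n. f (Suc n))))" by simp
  moreover have "range f \<subseteq> insert (f 0) (range (\<lambda>n. f (Suc n)))"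
    by (auto simp: image_iff) (metis not0_implies_Suc)
  ultimately show "bdd_above (range f)" by (rule bdd_above_mono)
qed (auto intro: bdd_above_mono)

lemma bdd_above_range_add_const_iff:
  fixes f :: "nat \<Rightarrow> real"
  shows "bdd_above (range (\<lambda>n. c + f n)) \<longleftrightarrow> bdd_above (range f)"
proof
  assume "bdd_above (range (\<lambda>n. c + f n))"
  then obtain C where "\<And>n. c + f n \<le> C" by (auto simp: bdd_above_def)
  then have "\<And>n. f n \<le> C - c" by (simp add: algebra_simps)
  then show "bdd_above (range f)" by (rule bdd_aboveI2)
next
  assume "bdd_above (range f)"
  then obtain C where "\<And>n. f n \<le> C" by (auto simp: bdd_above_def)
  then have "\<And>n. c + f n \<le> c + C" by simp
  then show "bdd_above (range (\<lambda>n. c + f n))" by (rule bdd_aboveI2)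
qed

lemma drifts_above_seq_shift_iff: "seq_shift y \<in> drifts_above c \<longleftrightarrow> y \<in> drifts_above c"
proof -
  have "(\<Sum>k<Suc n. y k) - c * real (Suc n) = (y 0 - c) + ((\<Sum>k<n. seq_shift y k) - c * real n)" for n
    using sum_lessThan_Suc_seq_shift[where f = id and n = n and y = y] by (simp add: algebra_simps)
  then show ?thesis
    unfolding drifts_above_def
    using bdd_above_range_Suc_iff[of "\<lambda>n. (\<Sum>k<n. y k) - c * real n"]
      bdd_above_range_add_const_iff[of "y 0 - c" "\<lambda>n. (\<Sum>k<n. seq_shift y k) - c * real n"]
    by simp
qed

lemma drifts_below_seq_shift_iff: "seq_shift y \<in> drifts_below c \<longleftrightarrow> y \<in> drifts_below c"
proof -
  have "y \<in> drifts_below c \<longleftrightarrow> (\<lambda>n. - y n) \<in> drifts_above (- c)" for y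
    unfolding drifts_below_def drifts_above_def
    by (simp add: sum_negf bdd_above_uminus_image[symmetric] algebra_simps)
  then show ?thesis
    using drifts_above_seq_shift_iff[of "\<lambda>n. - y n" "- c"] by (simp add: seq_shift_def)
qed

lemma partial_sum_pos_if_drifts_above:
  assumes "y \<in> drifts_above c"
  shows "\<exists>n. 0 < (\<Sum>k<n. 1 * y k + - c)"
proof (rule ccontr)
  assume "\<not> ?thesis"
  then have "(\<Sum>k<n. y k) - c * real n \<le> 0" for n by (auto simp: sum_subtractf not_less mult.commute)
  then have "bdd_above (range (\<lambda>n. (\<Sum>k<n. y k) - c * real n))" by (rule bdd_aboveI2)
  with assms show False by (simp add: drifts_above_def)
qed

lemma partial_sum_pos_if_drifts_below:
  assumes "y \<in> drifts_below c"
  shows "\<exists>n. 0 < (\<Sum>k<n. - 1 * y k + c)"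
proof (rule ccontr)
  assume "\<not> ?thesis"
  then have "0 \<le> (\<Sum>k<n. y k) - c * real n" for n by (auto simp: sum_subtractf not_less mult.commute)
  then have "bdd_below (range (\<lambda>n. (\<Sum>k<n. y k) - c * real n))" by (rule bdd_belowI2)
  with assms show False by (simp add: drifts_below_def)
qed

lemma nonpos_if_nat_multiples_bounded:
  fixes p K :: real
  assumes "\<And>j::nat. real j * p \<le> K"
  shows "p \<le> 0"
proof (rule ccontr)
  assume "\<not> p \<le> 0"
  then obtain j where "K < real j * p" using ex_less_of_nat_mult[of p K] by auto
  with assms[of j] show False by simp
qed

context stationary_sequence
begin

lemma null_set_if_measure_nonpos:
  "B \<in> sets seq_space \<Longrightarrow> measure nu B \<le> 0 \<Longrightarrow> B \<in> null_sets nu"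
  using measure_nonneg[of nu B] by (intro null_setsI) (auto simp: emeasure_eq_measure sets_eq)

lemma integrable_indicator_mult_coordinate_0:
  "B \<in> sets seq_space \<Longrightarrow> integrable nu (\<lambda>y. indicator B y * y 0)"
  using integrable_real_mult_indicator[OF _ integrable_coordinate_0, of B]
  by (simp add: sets_eq mult.commute)

lemma set_integral_coordinate_0_split:
  assumes [measurable]: "B \<in> sets seq_space"
  shows "(\<integral>y. indicator B y * (a * y 0 + b) \<partial>nu) = a * (\<integral>y. indicator B y * y 0 \<partial>nu) + b * measure nu B"
proof -
  have "(\<integral>y. indicator B y * (a * y 0 + b) \<partial>nu)
      = (\<integral>y. a * (indicator B y * y 0) + indicator B y * b \<partial>nu)"
    by (simp add: algebra_simps)
  also have "\<dots> = (\<integral>y. a * (indicator B y * y 0) \<partial>nu) + (\<integral>y. indicator B y * b \<partial>nu)"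
    using integrable_indicator_mult_coordinate_0[OF assms]
    by (intro Bochner_Integration.integral_add) (auto simp: sets_eq emeasure_eq_measure)
  finally show ?thesis by (simp add: sets_eq)
qed

lemma abs_set_integral_coordinate_0_le:
  assumes "B \<in> sets seq_space"
  shows "\<bar>\<integral>y. indicator B y * y 0 \<partial>nu\<bar> \<le> (\<integral>y. \<bar>y 0\<bar> \<partial>nu)"
proof -
  have "\<bar>\<integral>y. indicator B y * y 0 \<partial>nu\<bar> \<le> (\<integral>y. \<bar>indicator B y * y 0\<bar> \<partial>nu)"
    by (rule integral_abs_bound)
  also have "\<dots> \<le> (\<integral>y. \<bar>y 0\<bar> \<partial>nu)"
    using integrable_indicator_mult_coordinate_0[OF assms] integrable_coordinate_0
    by (intro integral_mono) (auto simp: indicator_def)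
  finally show ?thesis .
qed

lemma measure_mult_le_set_integral_if_drifts_above:
  assumes [measurable]: "B \<in> sets seq_space"
    and "\<And>y. seq_shift y \<in> B \<longleftrightarrow> y \<in> B" and "B \<subseteq> drifts_above c"
  shows "c * measure nu B \<le> (\<integral>y. indicator B y * y 0 \<partial>nu)"
proof -
  have "0 \<le> (\<integral>y. indicator B y * (1 * y 0 + - c) \<partial>nu)"
    using assms partial_sum_pos_if_drifts_above by (intro maximal_ergodic) auto
  then show ?thesis using set_integral_coordinate_0_split[of B 1 "- c"] by simp
qed

lemma set_integral_le_measure_mult_if_drifts_below:
  assumes [measurable]: "B \<in> sets seq_space"
    and "\<And>y. seq_shift y \<in> B \<longleftrightarrow> y \<in> B" and "B \<subseteq> drifts_below c"
  shows "(\<integral>y. indicator B y * y 0 \<partial>nu) \<le> c * measure nu B"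
proof -
  have "0 \<le> (\<integral>y. indicator B y * (- 1 * y 0 + c) \<partial>nu)"
    using assms partial_sum_pos_if_drifts_below by (intro maximal_ergodic) auto
  then show ?thesis using set_integral_coordinate_0_split[of B "- 1" c] by simp
qed

lemma null_drifts_below_Int_drifts_above:
  assumes "a < b"
  shows "drifts_below a \<inter> drifts_above b \<in> null_sets nu"
proof -
  let ?B = "drifts_below a \<inter> drifts_above b"
  have "b * measure nu ?B \<le> a * measure nu ?B"
    using measure_mult_le_set_integral_if_drifts_above[of ?B b] set_integral_le_measure_mult_if_drifts_below[of ?B a]
    by (simp add: drifts_above_seq_shift_iff drifts_below_seq_shift_iff)
  then have "(b - a) * measure nu ?B \<le> 0" by (simp add: left_diff_distrib)
  with assms have "measure nu ?B \<le> 0" by (simp add: mult_le_0_iff)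
  then show ?thesis by (intro null_set_if_measure_nonpos) simp
qed

lemma null_Inter_drifts_above: "(\<Inter>j::nat. drifts_above (real j)) \<in> null_sets nu"
proof (rule null_set_if_measure_nonpos)
  let ?B = "\<Inter>j::nat. drifts_above (real j)"
  show "?B \<in> sets seq_space" by measurable
  show "measure nu ?B \<le> 0"
  proof (rule nonpos_if_nat_multiples_bounded)
    fix j :: nat
    have "real j * measure nu ?B \<le> (\<integral>y. indicator ?B y * y 0 \<partial>nu)"
      by (rule measure_mult_le_set_integral_if_drifts_above) (auto simp: drifts_above_seq_shift_iff)
    then show "real j * measure nu ?B \<le> (\<integral>y. \<bar>y 0\<bar> \<partial>nu)"
      using abs_set_integral_coordinate_0_le[of ?B] by simp
  qed
qed

lemma null_Inter_drifts_below: "(\<Inter>j::nat. drifts_below (- real j)) \<in> null_sets nu"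
proof (rule null_set_if_measure_nonpos)
  let ?B = "\<Inter>j::nat. drifts_below (- real j)"
  show "?B \<in> sets seq_space" by measurable
  show "measure nu ?B \<le> 0"
  proof (rule nonpos_if_nat_multiples_bounded)
    fix j :: nat
    have "(\<integral>y. indicator ?B y * y 0 \<partial>nu) \<le> - real j * measure nu ?B"
      by (rule set_integral_le_measure_mult_if_drifts_below) (auto simp: drifts_below_seq_shift_iff)
    then show "real j * measure nu ?B \<le> (\<integral>y. \<bar>y 0\<bar> \<partial>nu)"
      using abs_set_integral_coordinate_0_le[of ?B] by simp
  qed
qed

end

definition cesaro_mean :: "(nat \<Rightarrow> real) \<Rightarrow> nat \<Rightarrow> real" where
  "cesaro_mean y n = (\<Sum>k<n. y k) / real n"

lemma eventually_less_mult_nat: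
  fixes C d :: real
  assumes "0 < d"
  shows "\<forall>\<^sub>F n in sequentially. 0 < n \<and> C < d * real n"
proof -
  obtain N where N: "C < real N * d" using ex_less_of_nat_mult[OF assms] by blast
  show ?thesis
  proof (rule eventually_sequentiallyI[of "Suc N"])
    fix n assume "Suc N \<le> n"
    then have "real N * d \<le> d * real n" using assms by (simp add: mult.commute)
    with N \<open>Suc N \<le> n\<close> show "0 < n \<and> C < d * real n" by simp
  qed
qed

lemma drifts_above_if_less_Limsup:
  assumes "ereal c < limsup (\<lambda>n. ereal (cesaro_mean y n))"
  shows "y \<in> drifts_above c"
proof -
  obtain d where d: "c < d" "ereal d < limsup (\<lambda>n. ereal (cesaro_mean y n))"
    using ereal_dense2[OF assms] by auto
  then have "\<not> limsup (\<lambda>n. ereal (cesaro_mean y n)) \<le> ereal d" by simp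
  then obtain z where "ereal d < z" "\<not> (\<forall>\<^sub>F n in sequentially. ereal (cesaro_mean y n) < z)"
    unfolding Limsup_le_iff by blast
  then have "\<exists>\<^sub>F n in sequentially. z \<le> ereal (cesaro_mean y n)"
    by (simp add: not_eventually not_less)
  then have freq: "\<exists>\<^sub>F n in sequentially. d < cesaro_mean y n"
    by (rule frequently_elim1) (use \<open>ereal d < z\<close> in \<open>metis less_le_trans less_ereal.simps(1)\<close>)
  show ?thesis
  proof (unfold drifts_above_def, rule CollectI, rule notI)
    assume "bdd_above (range (\<lambda>n. (\<Sum>k<n. y k) - c * real n))"
    then obtain C where C: "\<And>n. (\<Sum>k<n. y k) - c * real n \<le> C" by (auto simp: bdd_above_def)
    obtain n where n: "d < cesaro_mean y n" "0 < n" "C < (d - c) * real n"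
      using frequently_ex[OF frequently_eventually_frequently[OF freq eventually_less_mult_nat[of "d - c" C]]]
        d(1) by auto
    then have "d * real n < (\<Sum>k<n. y k)" by (simp add: cesaro_mean_def field_simps)
    with n(3) C[of n] show False by (simp add: algebra_simps)
  qed
qed

lemma drifts_below_if_Liminf_less:
  assumes "liminf (\<lambda>n. ereal (cesaro_mean y n)) < ereal c"
  shows "y \<in> drifts_below c"
proof -
  obtain d where d: "d < c" "liminf (\<lambda>n. ereal (cesaro_mean y n)) < ereal d"
    using ereal_dense2[OF assms] by auto
  then have "\<not> ereal d \<le> liminf (\<lambda>n. ereal (cesaro_mean y n))" by simp
  then obtain z where "z < ereal d" "\<not> (\<forall>\<^sub>F n in sequentially. z < ereal (cesaro_mean y n))"
    unfolding le_Liminf_iff by blast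
  then have "\<exists>\<^sub>F n in sequentially. ereal (cesaro_mean y n) \<le> z"
    by (simp add: not_eventually not_less)
  then have freq: "\<exists>\<^sub>F n in sequentially. cesaro_mean y n < d"
    by (rule frequently_elim1) (use \<open>z < ereal d\<close> in \<open>metis le_less_trans less_ereal.simps(1)\<close>)
  show ?thesis
  proof (unfold drifts_below_def, rule CollectI, rule notI)
    assume "bdd_below (range (\<lambda>n. (\<Sum>k<n. y k) - c * real n))"
    then obtain C where C: "\<And>n. C \<le> (\<Sum>k<n. y k) - c * real n" by (auto simp: bdd_below_def)
    obtain n where n: "cesaro_mean y n < d" "0 < n" "- C < (c - d) * real n"
      using frequently_ex[OF frequently_eventually_frequently[OF freq eventually_less_mult_nat[of "c - d" "- C"]]]
        d(1) by auto
    then have "(\<Sum>k<n. y k) < d * real n" by (simp add: cesaro_mean_def field_simps)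
    with n(3) C[of n] show False by (simp add: algebra_simps)
  qed
qed

lemma convergent_cesaro_mean_if_no_drift:
  assumes no_crossing: "\<And>a b. a \<in> \<rat> \<Longrightarrow> b \<in> \<rat> \<Longrightarrow> a < b \<Longrightarrow> y \<notin> drifts_below a \<inter> drifts_above b"
    and "y \<notin> drifts_above b" and "y \<notin> drifts_below a"
  shows "convergent (cesaro_mean y)"
proof -
  let ?u = "\<lambda>n. ereal (cesaro_mean y n)"
  have upper: "limsup ?u \<le> ereal b" and lower: "ereal a \<le> liminf ?u"
    using assms(2,3) drifts_above_if_less_Limsup drifts_below_if_Liminf_less not_le by blast+
  have "liminf ?u = limsup ?u"
  proof (rule ccontr)
    assume "liminf ?u \<noteq> limsup ?u"
    then have "liminf ?u < limsup ?u" using Liminf_le_Limsup[of sequentially ?u] by simp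
    then obtain p where p: "liminf ?u < ereal p" "ereal p < limsup ?u"
      using ereal_dense2 by blast
    then obtain q where q: "ereal p < ereal q" "ereal q < limsup ?u"
      using ereal_dense2 by blast
    from p q have pq: "liminf ?u < ereal p" "p < q" "ereal q < limsup ?u" by auto
    obtain a' where a': "a' \<in> \<rat>" "p < a'" "a' < q" using Rats_dense_in_real[OF pq(2)] by blast
    obtain b' where b': "b' \<in> \<rat>" "a' < b'" "b' < q" using Rats_dense_in_real[OF a'(3)] by blast
    have "y \<in> drifts_below a'"
      using pq(1) a'(2) by (intro drifts_below_if_Liminf_less) (auto intro: order.strict_trans)
    moreover have "y \<in> drifts_above b'"
      using b'(3) by (intro drifts_above_if_less_Limsup less_trans[OF _ pq(3)]) simp
    ultimately show False using no_crossing[OF a'(1) b'(1) b'(2)] by blast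
  qed
  moreover obtain q where "limsup ?u = ereal q"
    using upper lower Liminf_le_Limsup[of sequentially ?u] by (cases "limsup ?u") auto
  ultimately have "?u \<longlonglongrightarrow> ereal q"
    by (intro Liminf_eq_Limsup) simp_all
  then show ?thesis by (auto simp: convergent_def)
qed

theorem (in stationary_sequence) birkhoff_ergodic: "AE y in nu. convergent (cesaro_mean y)"
proof -
  have "AE y in nu. \<forall>p \<in> {p :: rat \<times> rat. fst p < snd p}.
      y \<notin> drifts_below (of_rat (fst p)) \<inter> drifts_above (of_rat (snd p))"
    by (rule AE_ball_countable', rule AE_not_in, rule null_drifts_below_Int_drifts_above)
       (auto simp: of_rat_less)
  moreover have "AE y in nu. y \<notin> (\<Inter>j::nat. drifts_above (real j))"
    by (rule AE_not_in[OF null_Inter_drifts_above])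
  moreover have "AE y in nu. y \<notin> (\<Inter>j::nat. drifts_below (- real j))"
    by (rule AE_not_in[OF null_Inter_drifts_below])
  ultimately show ?thesis
  proof eventually_elim
    case (elim y)
    obtain j j' :: nat where "y \<notin> drifts_above (real j)" "y \<notin> drifts_below (- real j')"
      using elim(2,3) by blast
    then show ?case
    proof (rule convergent_cesaro_mean_if_no_drift[rotated])
      fix a b :: real assume "a \<in> \<rat>" "b \<in> \<rat>" "a < b"
      then show "y \<notin> drifts_below a \<inter> drifts_above b"
        using elim(1) by (auto elim!: Rats_cases simp: of_rat_less)
    qed
  qed
qed

section \<open>Time averages of continuous functions\<close>

lemma continuous_on_atLeast_if_continuous_on_Icc:
  fixes f :: "real \<Rightarrow> 'a::topological_space"
  assumes "\<And>b. a \<le> b \<Longrightarrow> continuous_on {a..b} f"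
  shows "continuous_on {a..} f"
  unfolding continuous_on_eq_continuous_within
proof
  fix x assume x: "x \<in> {a..}"
  have "continuous (at x within {a..x+1}) f"
    using assms[of "x+1"] x by (simp add: continuous_on_eq_continuous_within)
  moreover have "at x within {a..} = at x within {a..x+1}"
    by (rule at_within_nhd[of x "{..<x+1}"]) auto
  ultimately show "continuous (at x within {a..}) f" by simp
qed

lemma integrable_on_Icc_if_continuous_on_atLeast:
  fixes f :: "real \<Rightarrow> 'a::banach"
  assumes "continuous_on {a..} f" and "a \<le> u"
  shows "f integrable_on {u..v}"
  by (rule integrable_continuous_interval, rule continuous_on_subset[OF assms(1)]) (use assms(2) in auto)

lemma continuous_on_integral_atLeast:
  fixes g :: "real \<Rightarrow> 'a::banach"
  assumes "continuous_on {a..} g"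
  shows "continuous_on {a..} (\<lambda>t. integral {a..t} g)"
  by (rule continuous_on_atLeast_if_continuous_on_Icc, rule indefinite_integral_continuous_1,
      rule integrable_on_Icc_if_continuous_on_atLeast[OF assms]) simp

lemma integral_Icc_split:
  fixes f :: "real \<Rightarrow> 'a::banach"
  assumes "continuous_on {c..} f" and "c \<le> a" "a \<le> s" "s \<le> t"
  shows "integral {a..t} f = integral {a..s} f + integral {s..t} f"
  using Henstock_Kurzweil_Integration.integral_combine[OF assms(3,4)
      integrable_on_Icc_if_continuous_on_atLeast[OF assms(1,2)]]
  by simp

lemma abs_integral_le_integral_abs:
  fixes g :: "real \<Rightarrow> real"
  assumes "continuous_on {c..} g" and "c \<le> u"
  shows "\<bar>integral {u..v} g\<bar> \<le> integral {u..v} (\<lambda>s. \<bar>g s\<bar>)"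
  using integral_norm_bound_integral[of g "{u..v}" "\<lambda>s. \<bar>g s\<bar>"] assms
  by (auto intro!: integrable_on_Icc_if_continuous_on_atLeast continuous_intros)

lemma integral_nonneg_abs:
  fixes g :: "real \<Rightarrow> real"
  assumes "continuous_on {a..} g" and "a \<le> u"
  shows "0 \<le> integral {u..v} (\<lambda>s. \<bar>g s\<bar>)"
  using assms
  by (intro integral_nonneg integrable_on_Icc_if_continuous_on_atLeast continuous_intros) auto

definition unit_integrals :: "(real \<Rightarrow> real) \<Rightarrow> nat \<Rightarrow> real" where
  "unit_integrals g n = integral {real n..real n + 1} g"

lemma integral_real_nat_eq_sum_unit_integrals:
  assumes "continuous_on {0..} g"
  shows "integral {0..real N} g = (\<Sum>k<N. unit_integrals g k)"
proof (induction N)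
  case (Suc N)
  have "integral {0..real (Suc N)} g = integral {0..real N} g + integral {real N..real (Suc N)} g"
    by (rule integral_Icc_split[OF assms order.refl]) auto
  with Suc show ?case by (simp add: unit_integrals_def add.commute)
qed simp

lemma tendsto_over_n_if_cesaro_mean_tendsto:
  assumes "cesaro_mean z \<longlonglongrightarrow> r"
  shows "(\<lambda>n. z n / real n) \<longlonglongrightarrow> 0"
proof -
  have "(\<lambda>n. cesaro_mean z (Suc n) * (real (Suc n) / real n) - cesaro_mean z n) \<longlonglongrightarrow> r * 1 - r"
    by (intro tendsto_intros LIMSEQ_Suc[OF assms] assms LIMSEQ_Suc_n_over_n)
  moreover have "cesaro_mean z (Suc n) * (real (Suc n) / real n) - cesaro_mean z n = z n / real n" for n
  proof -
    have "cesaro_mean z (Suc n) * (real (Suc n) / real n) = (\<Sum>k<Suc n. z k) / real n"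
      by (simp add: cesaro_mean_def del: of_nat_Suc sum.lessThan_Suc)
    then show ?thesis by (simp add: cesaro_mean_def add_divide_distrib)
  qed
  ultimately show ?thesis by simp
qed

lemma filterlim_nat_floor_at_top: "filterlim (\<lambda>t::real. nat \<lfloor>t\<rfloor>) sequentially at_top"
  by (rule filterlim_compose[OF filterlim_nat_sequentially filterlim_floor_sequentially])

lemma integral_abs_le_linear_if_convergent_cesaro:
  fixes g :: "real \<Rightarrow> real"
  assumes cg: "continuous_on {0..} g"
    and "convergent (cesaro_mean (unit_integrals (\<lambda>s. \<bar>g s\<bar>)))"
  shows "\<exists>C. \<forall>\<^sub>F t in at_top. integral {0..t} (\<lambda>s. \<bar>g s\<bar>) \<le> C * t"
proof -
  have cag: "continuous_on {0..} (\<lambda>s. \<bar>g s\<bar>)" by (intro continuous_intros cg)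
  obtain K where K: "K > 0" "\<And>N. norm (cesaro_mean (unit_integrals (\<lambda>s. \<bar>g s\<bar>)) N) \<le> K"
    using convergent_imp_Bseq[OF assms(2)] by (auto elim: BseqE)
  have "\<forall>\<^sub>F t in at_top. integral {0..t} (\<lambda>s. \<bar>g s\<bar>) \<le> (2 * K) * t"
    using eventually_ge_at_top[of "1::real"]
  proof eventually_elim
    case (elim t)
    define N where "N = Suc (nat \<lfloor>t\<rfloor>)"
    have N: "t \<le> real N" "real N \<le> 2 * t" "0 < N" using elim unfolding N_def by linarith+
    have "integral {0..t} (\<lambda>s. \<bar>g s\<bar>) \<le> integral {0..real N} (\<lambda>s. \<bar>g s\<bar>)"
      using integral_Icc_split[OF cag order.refl, of t "real N"] integral_nonneg_abs[OF cg, of t "real N"] N elim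
      by simp
    also have "\<dots> = cesaro_mean (unit_integrals (\<lambda>s. \<bar>g s\<bar>)) N * real N"
      using integral_real_nat_eq_sum_unit_integrals[OF cag, of N] N(3) by (simp add: cesaro_mean_def)
    also have "\<dots> \<le> K * (2 * t)"
      using K(1) K(2)[of N] N by (intro mult_mono) auto
    finally show ?case by simp
  qed
  then show ?thesis by blast
qed

lemma tendsto_nat_floor_over_self: "((\<lambda>t. real (nat \<lfloor>t\<rfloor>) / t) \<longlongrightarrow> 1) at_top"
proof (rule tendsto_sandwich[of "\<lambda>t. 1 - inverse t" _ _ "\<lambda>t. 1"])
  show "\<forall>\<^sub>F t in at_top. 1 - inverse t \<le> real (nat \<lfloor>t\<rfloor>) / t"
    using eventually_ge_at_top[of "1::real"]
  proof eventually_elim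
    case (elim t)
    have "1 - inverse t = (t - 1) / t" using elim by (simp add: field_simps)
    also have "\<dots> \<le> real (nat \<lfloor>t\<rfloor>) / t" using elim by (intro divide_right_mono) linarith+
    finally show ?case .
  qed
  show "\<forall>\<^sub>F t in at_top. real (nat \<lfloor>t\<rfloor>) / t \<le> 1"
    using eventually_ge_at_top[of "1::real"] by eventually_elim auto
  have "((\<lambda>t::real. 1 - inverse t) \<longlongrightarrow> 1 - 0) at_top"
    by (intro tendsto_diff tendsto_const tendsto_inverse_0_at_top filterlim_ident)
  then show "((\<lambda>t::real. 1 - inverse t) \<longlongrightarrow> 1) at_top" by simp
qed simp

lemma abs_integral_from_floor_le:
  fixes g :: "real \<Rightarrow> real"
  assumes cg: "continuous_on {0..} g" and "1 \<le> t"
  shows "\<bar>integral {real (nat \<lfloor>t\<rfloor>)..t} g\<bar> \<le> unit_integrals (\<lambda>s. \<bar>g s\<bar>) (nat \<lfloor>t\<rfloor>)"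
proof -
  have N: "0 \<le> real (nat \<lfloor>t\<rfloor>)" "real (nat \<lfloor>t\<rfloor>) \<le> t" "t \<le> real (nat \<lfloor>t\<rfloor>) + 1"
    using \<open>1 \<le> t\<close> by linarith+
  have "\<bar>integral {real (nat \<lfloor>t\<rfloor>)..t} g\<bar> \<le> integral {real (nat \<lfloor>t\<rfloor>)..t} (\<lambda>s. \<bar>g s\<bar>)"
    by (rule abs_integral_le_integral_abs[OF cg N(1)])
  also have "\<dots> \<le> unit_integrals (\<lambda>s. \<bar>g s\<bar>) (nat \<lfloor>t\<rfloor>)"
    using integral_Icc_split[OF _ N, of "\<lambda>s. \<bar>g s\<bar>"] integral_nonneg_abs[OF cg, of t] N(1,2) cg
    by (simp add: unit_integrals_def continuous_intros)
  finally show ?thesis .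
qed

lemma tendsto_integral_average_if_cesaro:
  fixes g :: "real \<Rightarrow> real"
  assumes cg: "continuous_on {0..} g"
    and avg: "cesaro_mean (unit_integrals g) \<longlonglongrightarrow> q"
    and abs_avg: "cesaro_mean (unit_integrals (\<lambda>s. \<bar>g s\<bar>)) \<longlonglongrightarrow> r"
  shows "((\<lambda>t. integral {0..t} g / t) \<longlongrightarrow> q) at_top"
proof -
  define N where "N t = nat \<lfloor>t\<rfloor>" for t :: real
  have N: "real (N t) \<le> t" "1 \<le> N t" if "1 \<le> t" for t
    using that unfolding N_def by linarith+
  have N_lim: "filterlim N sequentially at_top"
    unfolding N_def by (rule filterlim_nat_floor_at_top)
  have remainder: "((\<lambda>t. integral {real (N t)..t} g / t) \<longlongrightarrow> 0) at_top"
  proof (rule Lim_null_comparison)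
    show "((\<lambda>t. unit_integrals (\<lambda>s. \<bar>g s\<bar>) (N t) / real (N t)) \<longlongrightarrow> 0) at_top"
      by (rule filterlim_compose[OF tendsto_over_n_if_cesaro_mean_tendsto[OF abs_avg] N_lim])
    show "\<forall>\<^sub>F t in at_top. norm (integral {real (N t)..t} g / t)
        \<le> unit_integrals (\<lambda>s. \<bar>g s\<bar>) (N t) / real (N t)"
      using eventually_ge_at_top[of "1::real"]
    proof eventually_elim
      case (elim t)
      have "\<bar>integral {real (N t)..t} g\<bar> / t \<le> unit_integrals (\<lambda>s. \<bar>g s\<bar>) (N t) / t"
        using abs_integral_from_floor_le[OF cg elim] elim unfolding N_def
        by (simp add: divide_right_mono)
      also have "\<dots> \<le> unit_integrals (\<lambda>s. \<bar>g s\<bar>) (N t) / real (N t)"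
        using N[OF elim] integral_nonneg_abs[OF cg]
        by (intro divide_left_mono) (auto simp: unit_integrals_def)
      finally show ?case using elim by (simp add: abs_divide)
    qed
  qed
  have "((\<lambda>t. cesaro_mean (unit_integrals g) (N t) * (real (N t) / t)
             + integral {real (N t)..t} g / t) \<longlongrightarrow> q * 1 + 0) at_top"
    unfolding N_def
    by (intro tendsto_intros filterlim_compose[OF avg filterlim_nat_floor_at_top]
        tendsto_nat_floor_over_self remainder[unfolded N_def])
  moreover have "\<forall>\<^sub>F t in at_top. cesaro_mean (unit_integrals g) (N t) * (real (N t) / t)
             + integral {real (N t)..t} g / t = integral {0..t} g / t"
    using eventually_ge_at_top[of "1::real"]
  proof eventually_elim
    case (elim t)
    have "integral {0..t} g = integral {0..real (N t)} g + integral {real (N t)..t} g"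
      by (rule integral_Icc_split[OF cg]) (use N[OF elim] in auto)
    with N[OF elim] show ?case
      by (simp add: integral_real_nat_eq_sum_unit_integrals[OF cg] cesaro_mean_def add_divide_distrib)
  qed
  ultimately show ?thesis by (simp add: Lim_transform_eventually)
qed

section \<open>Asymptotics of iterated integrals\<close>

lemma integral_power_Icc:
  assumes "0 \<le> t"
  shows "integral {0..t} (\<lambda>s. s ^ m) = t ^ (m + 1) / real (m + 1)"
proof -
  have "((\<lambda>s. s ^ m) has_integral (t ^ (m + 1) / real (m + 1) - 0 ^ (m + 1) / real (m + 1))) {0..t}"
  proof (rule fundamental_theorem_of_calculus)
    fix s assume "s \<in> {0..t}"
    have "((\<lambda>s. s ^ (m + 1) / real (m + 1)) has_real_derivative s ^ m) (at s within {0..t})"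
      by (auto intro!: derivative_eq_intros simp del: power_Suc)
    then show "((\<lambda>s. s ^ (m + 1) / real (m + 1)) has_vector_derivative s ^ m) (at s within {0..t})"
      by (simp add: has_real_derivative_iff_has_vector_derivative)
  qed (use assms in auto)
  then show ?thesis by (simp add: integral_unique)
qed

lemma integral_power_mult_by_parts:
  fixes g :: "real \<Rightarrow> real"
  assumes cg: "continuous_on {0..} g" and t: "0 \<le> t"
  shows "integral {0..t} (\<lambda>s. s ^ k * g s)
       = t ^ k * integral {0..t} g - real k * integral {0..t} (\<lambda>s. s ^ (k - 1) * integral {0..s} g)"
proof -
  define G where "G s = integral {0..s} g" for s
  define H where "H s = integral {0..s} (\<lambda>u. u ^ (k - 1) * G u)" for s
  have cG: "continuous_on {0..} G"
    unfolding G_def by (rule continuous_on_integral_atLeast[OF cg])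
  have cH: "continuous_on {0..} (\<lambda>u. u ^ (k - 1) * G u)" by (intro continuous_intros cG)
  have "((\<lambda>s. s ^ k * g s) has_integral
        ((t ^ k * G t - real k * H t) - (0 ^ k * G 0 - real k * H 0))) {0..t}"
  proof (rule fundamental_theorem_of_calculus)
    fix s assume s: "s \<in> {0..t}"
    have dG: "(G has_real_derivative g s) (at s within {0..t})"
      unfolding G_def using continuous_on_subset[OF cg] s by (intro integral_has_real_derivative) auto
    have dH: "(H has_real_derivative s ^ (k - 1) * G s) (at s within {0..t})"
      unfolding H_def using continuous_on_subset[OF cH] s by (intro integral_has_real_derivative) auto
    have "((\<lambda>s. s ^ k * G s - real k * H s) has_real_derivative s ^ k * g s) (at s within {0..t})"
      by (rule derivative_eq_intros dG dH refl | simp add: algebra_simps)+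
    then show "((\<lambda>s. s ^ k * G s - real k * H s) has_vector_derivative s ^ k * g s) (at s within {0..t})"
      by (simp add: has_real_derivative_iff_has_vector_derivative)
  qed (use t in auto)
  moreover have "G 0 = 0" "H 0 = 0" unfolding G_def H_def by auto
  ultimately show ?thesis unfolding G_def H_def by (simp add: integral_unique)
qed

lemma abs_integral_mult_le_split:
  fixes e g :: "real \<Rightarrow> real"
  assumes ce: "continuous_on {0..} e" and cg: "continuous_on {0..} g"
    and S: "0 \<le> S" "S \<le> t" and small: "\<And>s. S \<le> s \<Longrightarrow> \<bar>e s\<bar> \<le> \<delta> * s ^ k" and "0 \<le> \<delta>"
  shows "\<bar>integral {0..t} (\<lambda>s. e s * g s)\<bar>
     \<le> integral {0..S} (\<lambda>s. \<bar>e s * g s\<bar>) + \<delta> * t ^ k * integral {0..t} (\<lambda>s. \<bar>g s\<bar>)"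
proof -
  have ceg: "continuous_on {0..} (\<lambda>s. e s * g s)" by (intro continuous_intros ce cg)
  have cag: "continuous_on {0..} (\<lambda>s. \<bar>g s\<bar>)" by (intro continuous_intros cg)
  have "\<bar>integral {0..t} (\<lambda>s. e s * g s)\<bar> \<le> integral {0..t} (\<lambda>s. \<bar>e s * g s\<bar>)"
    by (rule abs_integral_le_integral_abs[OF ceg order.refl])
  also have "\<dots> = integral {0..S} (\<lambda>s. \<bar>e s * g s\<bar>) + integral {S..t} (\<lambda>s. \<bar>e s * g s\<bar>)"
    using ce cg S by (intro integral_Icc_split[of 0] continuous_intros) auto
  also have "integral {S..t} (\<lambda>s. \<bar>e s * g s\<bar>) \<le> integral {S..t} (\<lambda>s. \<delta> * t ^ k * \<bar>g s\<bar>)"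
  proof (rule integral_le)
    fix s assume s: "s \<in> {S..t}"
    have "\<delta> * s ^ k \<le> \<delta> * t ^ k"
      using s S \<open>0 \<le> \<delta>\<close> by (intro mult_left_mono power_mono) auto
    then have "\<bar>e s\<bar> \<le> \<delta> * t ^ k" using small[of s] s by simp
    then show "\<bar>e s * g s\<bar> \<le> \<delta> * t ^ k * \<bar>g s\<bar>" by (simp add: abs_mult mult_right_mono)
  qed (use S ce cg in \<open>auto intro!: integrable_on_Icc_if_continuous_on_atLeast continuous_intros\<close>)
  also have "\<dots> = \<delta> * t ^ k * integral {S..t} (\<lambda>s. \<bar>g s\<bar>)" by simp
  also have "integral {S..t} (\<lambda>s. \<bar>g s\<bar>) \<le> integral {0..t} (\<lambda>s. \<bar>g s\<bar>)"
    using integral_Icc_split[OF cag order.refl S] integral_nonneg_abs[OF cg order.refl, of S] by simp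
  finally show ?thesis
    using S \<open>0 \<le> \<delta>\<close> by (simp add: mult_left_mono)
qed

lemma tendsto_integral_mult_small:
  fixes e g :: "real \<Rightarrow> real"
  assumes ce: "continuous_on {0..} e" and cg: "continuous_on {0..} g"
    and small: "((\<lambda>s. e s / s ^ k) \<longlongrightarrow> 0) at_top"
    and linear: "\<forall>\<^sub>F t in at_top. integral {0..t} (\<lambda>s. \<bar>g s\<bar>) \<le> C * t"
  shows "((\<lambda>t. integral {0..t} (\<lambda>s. e s * g s) / t ^ (k + 1)) \<longlongrightarrow> 0) at_top"
proof (rule tendstoI)
  fix \<epsilon> :: real assume \<epsilon>: "0 < \<epsilon>"
  define \<delta> where "\<delta> = \<epsilon> / (2 * (\<bar>C\<bar> + 1))"
  have \<delta>: "0 < \<delta>" "\<delta> * (\<bar>C\<bar> + 1) = \<epsilon> / 2"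
    using \<epsilon> unfolding \<delta>_def by (simp_all add: field_simps)
  have "\<forall>\<^sub>F s in at_top. \<bar>e s\<bar> \<le> \<delta> * s ^ k"
    using tendstoD[OF small \<delta>(1)] eventually_gt_at_top[of "0::real"]
    by eventually_elim (simp add: abs_divide divide_less_eq)
  then obtain S0 where S0: "\<And>s. S0 \<le> s \<Longrightarrow> \<bar>e s\<bar> \<le> \<delta> * s ^ k"
    unfolding eventually_at_top_linorder by blast
  define S where "S = max S0 0"
  have S: "0 \<le> S" "\<And>s. S \<le> s \<Longrightarrow> \<bar>e s\<bar> \<le> \<delta> * s ^ k"
    using S0 unfolding S_def by auto
  define K where "K = integral {0..S} (\<lambda>s. \<bar>e s * g s\<bar>)"
  show "\<forall>\<^sub>F t in at_top. dist (integral {0..t} (\<lambda>s. e s * g s) / t ^ (k + 1)) 0 < \<epsilon>"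
    using linear eventually_ge_at_top[of "max S (max 1 (2 * \<bar>K\<bar> / \<epsilon> + 1))"]
  proof eventually_elim
    case (elim t)
    then have t: "S \<le> t" "1 \<le> t" "2 * \<bar>K\<bar> / \<epsilon> < t" by auto
    have "C * t \<le> (\<bar>C\<bar> + 1) * t" using t(2) by (intro mult_right_mono) auto
    with elim(1) have "integral {0..t} (\<lambda>s. \<bar>g s\<bar>) \<le> (\<bar>C\<bar> + 1) * t" by linarith
    then have "\<delta> * t ^ k * integral {0..t} (\<lambda>s. \<bar>g s\<bar>) \<le> \<delta> * t ^ k * ((\<bar>C\<bar> + 1) * t)"
      using \<delta>(1) t(2) by (intro mult_left_mono) auto
    then have "\<bar>integral {0..t} (\<lambda>s. e s * g s)\<bar> \<le> K + \<delta> * t ^ k * ((\<bar>C\<bar> + 1) * t)"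
      using abs_integral_mult_le_split[OF ce cg S(1) t(1) S(2)] \<delta>(1) unfolding K_def by linarith
    also have "\<delta> * t ^ k * ((\<bar>C\<bar> + 1) * t) = (\<delta> * (\<bar>C\<bar> + 1)) * t ^ (k + 1)"
      by (simp add: algebra_simps)
    also have "\<dots> = \<epsilon> / 2 * t ^ (k + 1)" by (simp only: \<delta>(2))
    finally have "\<bar>integral {0..t} (\<lambda>s. e s * g s)\<bar> / t ^ (k + 1) \<le> \<bar>K\<bar> / t ^ (k + 1) + \<epsilon> / 2"
      using t(2) by (simp add: divide_le_eq algebra_simps)
    also have "\<bar>K\<bar> / t ^ (k + 1) \<le> \<bar>K\<bar> / t"
      using t(2) by (intro divide_left_mono) (auto simp: power_increasing[of 1 "k + 1" t, simplified])
    also have "\<bar>K\<bar> / t < \<epsilon> / 2" using t(2,3) \<epsilon> by (simp add: field_simps)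
    finally show ?case using t(2) by (simp add: abs_divide)
  qed
qed

lemma tendsto_remainder_over_power:
  fixes h :: "real \<Rightarrow> real"
  assumes "((\<lambda>s. h s / s ^ m) \<longlongrightarrow> L) at_top"
  shows "((\<lambda>s. (h s - L * s ^ m) / s ^ m) \<longlongrightarrow> 0) at_top"
proof -
  have "((\<lambda>s. h s / s ^ m - L) \<longlongrightarrow> L - L) at_top" by (intro tendsto_intros assms)
  moreover have "\<forall>\<^sub>F s in at_top. h s / s ^ m - L = (h s - L * s ^ m) / s ^ m"
    using eventually_gt_at_top[of "0::real"] by eventually_elim (simp add: field_simps)
  ultimately show ?thesis by (simp add: Lim_transform_eventually)
qed

lemma tendsto_integral_average_power:
  fixes h :: "real \<Rightarrow> real"
  assumes ch: "continuous_on {0..} h" and lim: "((\<lambda>s. h s / s ^ m) \<longlongrightarrow> L) at_top"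
  shows "((\<lambda>t. integral {0..t} h / t ^ (m + 1)) \<longlongrightarrow> L / real (m + 1)) at_top"
proof -
  define e where "e s = h s - L * s ^ m" for s
  have ce: "continuous_on {0..} e" unfolding e_def by (intro continuous_intros ch)
  have e_small: "((\<lambda>s. e s / s ^ m) \<longlongrightarrow> 0) at_top"
    unfolding e_def by (rule tendsto_remainder_over_power[OF lim])
  have "\<forall>\<^sub>F t in at_top. integral {0..t} (\<lambda>s. \<bar>1::real\<bar>) \<le> 1 * t"
    using eventually_ge_at_top[of "0::real"] by eventually_elim simp
  then have "((\<lambda>t. integral {0..t} (\<lambda>s. e s * 1) / t ^ (m + 1)) \<longlongrightarrow> 0) at_top"
    by (rule tendsto_integral_mult_small[OF ce continuous_on_const e_small])
  then have "((\<lambda>t. integral {0..t} e / t ^ (m + 1) + L / real (m + 1)) \<longlongrightarrow> 0 + L / real (m + 1)) at_top"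
    by (intro tendsto_intros) simp
  moreover have "\<forall>\<^sub>F t in at_top.
      integral {0..t} e / t ^ (m + 1) + L / real (m + 1) = integral {0..t} h / t ^ (m + 1)"
    using eventually_gt_at_top[of "0::real"]
  proof eventually_elim
    case (elim t)
    have "integral {0..t} h = integral {0..t} (\<lambda>s. e s + L * s ^ m)" unfolding e_def by simp
    also have "\<dots> = integral {0..t} e + L * (t ^ (m + 1) / real (m + 1))"
      using elim by (subst integral_add)
        (auto simp: integral_power_Icc intro!: integrable_on_Icc_if_continuous_on_atLeast ce continuous_intros)
    finally show ?case using elim by (simp add: add_divide_distrib del: power_Suc)
  qed
  ultimately show ?thesis by (simp add: Lim_transform_eventually)
qed

lemma tendsto_integral_power_mult_average:
  fixes g :: "real \<Rightarrow> real"
  assumes cg: "continuous_on {0..} g" and G_lim: "((\<lambda>t. integral {0..t} g / t) \<longlongrightarrow> Q) at_top"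
  shows "((\<lambda>t. integral {0..t} (\<lambda>s. s ^ k * g s) / t ^ (k + 1)) \<longlongrightarrow> Q / real (k + 1)) at_top"
proof -
  define H where "H s = s ^ (k - 1) * integral {0..s} g" for s
  have H_avg: "((\<lambda>t. real k * (integral {0..t} H / t ^ (k + 1))) \<longlongrightarrow> real k * (Q / real (k + 1))) at_top"
  proof (cases "k = 0")
    case False
    have "\<forall>\<^sub>F s in at_top. integral {0..s} g / s = H s / s ^ k"
      using eventually_gt_at_top[of "0::real"]
    proof eventually_elim
      case (elim s)
      have "s ^ k = s ^ (k - 1) * s" using False by (metis Suc_pred' neq0_conv power_Suc2)
      with elim show ?case by (simp add: H_def)
    qed
    with G_lim have "((\<lambda>s. H s / s ^ k) \<longlongrightarrow> Q) at_top" by (rule Lim_transform_eventually)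
    then show ?thesis
      unfolding H_def
      by (intro tendsto_mult_left tendsto_integral_average_power continuous_intros
          continuous_on_integral_atLeast cg)
  qed simp
  have "((\<lambda>t. integral {0..t} g / t - real k * (integral {0..t} H / t ^ (k + 1)))
      \<longlongrightarrow> Q - real k * (Q / real (k + 1))) at_top"
    by (intro tendsto_diff G_lim H_avg)
  moreover have "Q - real k * (Q / real (k + 1)) = Q / real (k + 1)"
    by (simp add: field_simps)
  moreover have "\<forall>\<^sub>F t in at_top. integral {0..t} g / t - real k * (integral {0..t} H / t ^ (k + 1))
      = integral {0..t} (\<lambda>s. s ^ k * g s) / t ^ (k + 1)"
    using eventually_gt_at_top[of "0::real"]
  proof eventually_elim
    case (elim t)
    have "integral {0..t} (\<lambda>s. s ^ k * g s) = t ^ k * integral {0..t} g - real k * integral {0..t} H"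
      using integral_power_mult_by_parts[OF cg, of t k] elim unfolding H_def by simp
    then have "integral {0..t} (\<lambda>s. s ^ k * g s) / t ^ (k + 1)
        = t ^ k * integral {0..t} g / t ^ (k + 1) - real k * (integral {0..t} H / t ^ (k + 1))"
      by (simp add: diff_divide_distrib del: power_Suc)
    moreover have "t ^ k * integral {0..t} g / t ^ (k + 1) = integral {0..t} g / t" using elim by simp
    ultimately show ?case by simp
  qed
  ultimately show ?thesis by (simp add: Lim_transform_eventually)
qed

lemma tendsto_integral_mult_average:
  fixes F g :: "real \<Rightarrow> real"
  assumes cF: "continuous_on {0..} F" and cg: "continuous_on {0..} g"
    and F_lim: "((\<lambda>t. F t / t ^ k) \<longlongrightarrow> c) at_top"
    and G_lim: "((\<lambda>t. integral {0..t} g / t) \<longlongrightarrow> Q) at_top"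
    and linear: "\<forall>\<^sub>F t in at_top. integral {0..t} (\<lambda>s. \<bar>g s\<bar>) \<le> C * t"
  shows "((\<lambda>t. integral {0..t} (\<lambda>s. F s * g s) / t ^ (k + 1)) \<longlongrightarrow> c * Q / real (k + 1)) at_top"
proof -
  define e where "e s = F s - c * s ^ k" for s
  have ce: "continuous_on {0..} e" unfolding e_def by (intro continuous_intros cF)
  have "((\<lambda>t. integral {0..t} (\<lambda>s. e s * g s) / t ^ (k + 1)
        + c * (integral {0..t} (\<lambda>s. s ^ k * g s) / t ^ (k + 1))) \<longlongrightarrow> 0 + c * (Q / real (k + 1))) at_top"
    unfolding e_def
    by (intro tendsto_intros tendsto_integral_mult_small[OF _ cg _ linear] ce[unfolded e_def]
        tendsto_remainder_over_power[OF F_lim] tendsto_integral_power_mult_average[OF cg G_lim])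
  moreover have split: "integral {0..t} (\<lambda>s. F s * g s)
      = integral {0..t} (\<lambda>s. e s * g s) + c * integral {0..t} (\<lambda>s. s ^ k * g s)" for t
  proof -
    have "integral {0..t} (\<lambda>s. F s * g s) = integral {0..t} (\<lambda>s. e s * g s + c * (s ^ k * g s))"
      unfolding e_def by (simp add: algebra_simps)
    also have "\<dots> = integral {0..t} (\<lambda>s. e s * g s) + c * integral {0..t} (\<lambda>s. s ^ k * g s)"
      by (subst integral_add)
        (auto intro!: integrable_on_Icc_if_continuous_on_atLeast ce cg continuous_intros)
    finally show ?thesis .
  qed
  ultimately show ?thesis by (simp add: add_divide_distrib)
qed

lemma continuous_on_iter_int_rev:
  assumes "continuous_on {0..} x"
  shows "continuous_on {0..} (iter_int_rev x rs)"
proof (induction rs)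
  case (Cons i rs)
  then show ?case
    using assms by (simp add: continuous_on_integral_atLeast continuous_intros)
qed (simp add: continuous_on_const)

lemma tendsto_iter_int_rev:
  fixes x :: "real \<Rightarrow> real ^ 'n" and Q :: "real ^ 'n"
  assumes cx: "continuous_on {0..} x"
    and avg: "\<And>i. ((\<lambda>t. integral {0..t} (\<lambda>s. x s $ i) / t) \<longlongrightarrow> Q $ i) at_top"
    and linear: "\<And>i. \<exists>C. \<forall>\<^sub>F t in at_top. integral {0..t} (\<lambda>s. \<bar>x s $ i\<bar>) \<le> C * t"
  shows "((\<lambda>t. iter_int_rev x rs t / t ^ length rs) \<longlongrightarrow> (\<Prod>i\<leftarrow>rs. Q $ i) / fact (length rs)) at_top"
proof (induction rs)
  case (Cons i rs)
  obtain C where C: "\<forall>\<^sub>F t in at_top. integral {0..t} (\<lambda>s. \<bar>x s $ i\<bar>) \<le> C * t"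
    using linear by blast
  have "((\<lambda>t. integral {0..t} (\<lambda>s. iter_int_rev x rs s * x s $ i) / t ^ (length rs + 1))
      \<longlongrightarrow> (\<Prod>i\<leftarrow>rs. Q $ i) / fact (length rs) * Q $ i / real (length rs + 1)) at_top"
    using cx by (intro tendsto_integral_mult_average[OF continuous_on_iter_int_rev[OF cx] _ Cons avg C]
        continuous_intros)
  moreover have "(\<Prod>i\<leftarrow>rs. Q $ i) / fact (length rs) * Q $ i / real (length rs + 1)
      = (\<Prod>i\<leftarrow>i # rs. Q $ i) / fact (length (i # rs))"
    by (simp add: field_simps)
  ultimately show ?case by simp
qed simp

section \<open>Unit-interval integrals of a stationary process\<close>

lemma abs_integral_diff_left_endpoint_le:
  fixes f :: "real \<Rightarrow> real"
  assumes cf: "continuous_on {u..v} f" and "u \<le> v"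
    and close: "\<And>s. s \<in> {u..v} \<Longrightarrow> \<bar>f s - f u\<bar> \<le> \<epsilon>"
  shows "\<bar>integral {u..v} f - (v - u) * f u\<bar> \<le> (v - u) * \<epsilon>"
proof -
  have "integral {u..v} (\<lambda>s. f s - f u) = integral {u..v} f - integral {u..v} (\<lambda>s. f u)"
    by (rule integral_diff[OF integrable_continuous_interval[OF cf] integrable_const_ivl])
  then have "integral {u..v} f - (v - u) * f u = integral {u..v} (\<lambda>s. f s - f u)"
    using \<open>u \<le> v\<close> by simp
  also have "\<bar>\<dots>\<bar> \<le> integral {u..v} (\<lambda>s. \<epsilon>)"
    using close
    by (intro integral_norm_bound_integral[where f = "\<lambda>s. f s - f u", simplified])
       (auto intro!: integrable_continuous_interval continuous_intros cf)
  also have "\<dots> = (v - u) * \<epsilon>" using \<open>u \<le> v\<close> by simp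
  finally show ?thesis .
qed

lemma integral_eq_sum_uniform_partition:
  fixes f :: "real \<Rightarrow> real"
  assumes cf: "continuous_on {a..a + 1} f" and "0 < m"
  shows "integral {a..a + 1} f = (\<Sum>j<m. integral {a + real j / real m..a + real (Suc j) / real m} f)"
proof -
  have "integral {a..a + real k / real m} f
      = (\<Sum>j<k. integral {a + real j / real m..a + real (Suc j) / real m} f)" if "k \<le> m" for k
    using that
  proof (induction k)
    case (Suc k)
    have "real (Suc k) / real m \<le> 1" using Suc.prems \<open>0 < m\<close> by (simp add: divide_le_eq)
    then have "f integrable_on {a..a + real (Suc k) / real m}"
      by (intro integrable_continuous_interval continuous_on_subset[OF cf]) auto
    then have "integral {a..a + real k / real m} f + integral {a + real k / real m..a + real (Suc k) / real m} f
        = integral {a..a + real (Suc k) / real m} f"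
      by (intro Henstock_Kurzweil_Integration.integral_combine) (auto simp: divide_right_mono)
    with Suc show ?case by simp
  qed simp
  from this[of m] \<open>0 < m\<close> show ?thesis by simp
qed

lemma abs_riemann_sum_diff_integral_le:
  fixes f :: "real \<Rightarrow> real"
  assumes cf: "continuous_on {a..a + 1} f" and "0 < m"
    and close: "\<And>s s'. s \<in> {a..a + 1} \<Longrightarrow> s' \<in> {a..a + 1} \<Longrightarrow> \<bar>s' - s\<bar> \<le> 1 / real m \<Longrightarrow> \<bar>f s' - f s\<bar> \<le> \<eta>"
  shows "\<bar>(\<Sum>j<m. f (a + real j / real m)) / real m - integral {a..a + 1} f\<bar> \<le> \<eta>"
proof -
  define u where "u j = a + real j / real m" for j
  have piece: "\<bar>integral {u j..u (Suc j)} f - f (u j) / real m\<bar> \<le> \<eta> / real m" if "j < m" for j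
  proof -
    have width: "u (Suc j) - u j = 1 / real m" unfolding u_def by (simp add: add_divide_distrib)
    have u: "u j \<in> {a..a + 1}" "u (Suc j) \<in> {a..a + 1}"
      using \<open>j < m\<close> unfolding u_def by (auto simp: divide_le_eq)
    have "\<bar>integral {u j..u (Suc j)} f - (u (Suc j) - u j) * f (u j)\<bar> \<le> (u (Suc j) - u j) * \<eta>"
    proof (rule abs_integral_diff_left_endpoint_le)
      show "continuous_on {u j..u (Suc j)} f" by (rule continuous_on_subset[OF cf]) (use u in auto)
      show "u j \<le> u (Suc j)" unfolding u_def by (simp add: divide_right_mono)
      fix s assume "s \<in> {u j..u (Suc j)}"
      then show "\<bar>f s - f (u j)\<bar> \<le> \<eta>" using close[of "u j" s] u width by auto
    qed
    with width show ?thesis by simp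
  qed
  have "\<bar>(\<Sum>j<m. f (u j)) / real m - integral {a..a + 1} f\<bar>
      = \<bar>\<Sum>j<m. integral {u j..u (Suc j)} f - f (u j) / real m\<bar>"
    unfolding integral_eq_sum_uniform_partition[OF cf \<open>0 < m\<close>] u_def
    by (simp add: sum_subtractf sum_divide_distrib abs_minus_commute)
  also have "\<dots> \<le> (\<Sum>j<m. \<eta> / real m)"
    by (rule order.trans[OF sum_abs sum_mono]) (use piece in auto)
  also have "\<dots> = \<eta>" using \<open>0 < m\<close> by simp
  finally show ?thesis by (simp add: u_def)
qed

lemma tendsto_riemann_sum:
  fixes f :: "real \<Rightarrow> real"
  assumes cf: "continuous_on {a..a + 1} f"
  shows "(\<lambda>m. (\<Sum>j<m. f (a + real j / real m)) / real m) \<longlonglongrightarrow> integral {a..a + 1} f"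
proof (rule LIMSEQ_I)
  fix \<epsilon> :: real assume \<epsilon>: "0 < \<epsilon>"
  obtain d where d: "0 < d"
    "\<And>s s'. s \<in> {a..a + 1} \<Longrightarrow> s' \<in> {a..a + 1} \<Longrightarrow> dist s' s < d \<Longrightarrow> dist (f s') (f s) < \<epsilon> / 2"
    using compact_uniformly_continuous[OF cf compact_Icc] \<epsilon>
    unfolding uniformly_continuous_on_def by (metis half_gt_zero)
  obtain M :: nat where M: "1 / d < real M" using reals_Archimedean2 by blast
  have "norm ((\<Sum>j<m. f (a + real j / real m)) / real m - integral {a..a + 1} f) < \<epsilon>"
    if "Suc M \<le> m" for m
  proof -
    have "real M \<le> real m" using that by simp
    with M have "1 / d < real m" by linarith
    with that d(1) have m: "0 < m" "1 / real m < d" by (auto simp: field_simps)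
    have "\<bar>(\<Sum>j<m. f (a + real j / real m)) / real m - integral {a..a + 1} f\<bar> \<le> \<epsilon> / 2"
      using d(2) m by (intro abs_riemann_sum_diff_integral_le[OF cf m(1)]) (fastforce simp: dist_real_def)
    with \<epsilon> show ?thesis by simp
  qed
  then show "\<exists>N. \<forall>m\<ge>N. norm ((\<Sum>j<m. f (a + real j / real m)) / real m - integral {a..a + 1} f) < \<epsilon>"
    by blast
qed

definition path_space :: "(real \<Rightarrow> 'a::topological_space) measure" where
  "path_space = Pi\<^sub>M {0..} (\<lambda>_. borel)"

definition riemann_sum :: "('a \<Rightarrow> real) \<Rightarrow> (real \<Rightarrow> 'a) \<Rightarrow> real \<Rightarrow> nat \<Rightarrow> real" where
  "riemann_sum \<phi> p a m = (\<Sum>j<m. \<phi> (p (a + real j / real m))) / real m"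

text \<open>A limit of Riemann sums rather than an integral, so that it is measurable on the path
  space; for continuous paths it is the integral of \<phi> \<circ> p over [n, n + 1].\<close>
definition path_unit_integrals :: "('a \<Rightarrow> real) \<Rightarrow> (real \<Rightarrow> 'a) \<Rightarrow> nat \<Rightarrow> real" where
  "path_unit_integrals \<phi> p n = lim (riemann_sum \<phi> p (real n))"

lemma measurable_riemann_sum:
  assumes [measurable]: "\<phi> \<in> borel_measurable borel" and "0 \<le> a"
  shows "(\<lambda>p. riemann_sum \<phi> p a m) \<in> borel_measurable (path_space :: (real \<Rightarrow> 'a::topological_space) measure)"
proof -
  have [measurable]: "(\<lambda>p. p (a + real j / real m)) \<in> borel_measurable (path_space :: (real \<Rightarrow> 'a) measure)" for j
    unfolding path_space_def by (rule measurable_component_singleton) (use \<open>0 \<le> a\<close> in auto)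
  show ?thesis unfolding riemann_sum_def by measurable
qed

lemma measurable_path_unit_integrals:
  assumes "\<phi> \<in> borel_measurable borel"
  shows "path_unit_integrals \<phi> \<in> (path_space :: (real \<Rightarrow> 'a::topological_space) measure) \<rightarrow>\<^sub>M seq_space"
  unfolding seq_space_def path_unit_integrals_def
  by (rule measurable_PiM_single')
     (auto simp: space_PiM intro!: borel_measurable_lim_metric measurable_riemann_sum assms)

locale continuous_stationary_process = prob_space M for M :: "'w measure" +
  fixes xi :: "real \<Rightarrow> 'w \<Rightarrow> 'a::euclidean_space"
  assumes measurable_xi: "\<And>t. 0 \<le> t \<Longrightarrow> xi t \<in> borel_measurable M"
    and continuous_paths: "\<And>w. w \<in> space M \<Longrightarrow> continuous_on {0..} (\<lambda>t. xi t w)"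
    and stationary: "stationary_process M xi"
    and integrable_norm_xi_0: "integrable M (\<lambda>w. norm (xi 0 w))"
begin

definition shifted_path :: "real \<Rightarrow> 'w \<Rightarrow> real \<Rightarrow> 'a" where
  "shifted_path h w = (\<lambda>t\<in>{0..}. xi (t + h) w)"

lemma measurable_shifted_path: "0 \<le> h \<Longrightarrow> shifted_path h \<in> M \<rightarrow>\<^sub>M path_space"
  unfolding shifted_path_def path_space_def by (rule measurable_restrict) (auto intro: measurable_xi)

lemma distr_shifted_path: "0 \<le> h \<Longrightarrow> distr M path_space (shifted_path h) = distr M path_space (shifted_path 0)"
  using stationary unfolding stationary_process_def shifted_path_def path_space_def by simp

lemma distr_xi:
  assumes "0 \<le> h"
  shows "distr M borel (xi h) = distr M borel (xi 0)"
proof -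
  have eval_0: "(\<lambda>p. p 0) \<in> borel_measurable (path_space :: (real \<Rightarrow> 'a) measure)"
    unfolding path_space_def by (rule measurable_component_singleton) simp
  have distr_eq: "distr M borel (xi h') = distr (distr M path_space (shifted_path h')) borel (\<lambda>p. p 0)"
    if "0 \<le> h'" for h'
  proof -
    have "xi h' = (\<lambda>p. p 0) \<circ> shifted_path h'" by (auto simp: shifted_path_def)
    then show ?thesis
      using distr_distr[OF eval_0 measurable_shifted_path[OF that]] by simp
  qed
  show ?thesis
    using distr_eq[OF assms] distr_eq[of 0] distr_shifted_path[OF assms] by simp
qed

lemma integrable_norm_xi:
  assumes "0 \<le> h"
  shows "integrable M (\<lambda>w. norm (xi h w))"
proof -
  have "integrable (distr M borel (xi 0)) norm"
    using integrable_norm_xi_0 by (simp add: integrable_distr_eq measurable_xi)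
  then have "integrable (distr M borel (xi h)) norm" by (simp add: distr_xi[OF assms])
  then show ?thesis using assms by (simp add: integrable_distr_eq measurable_xi)
qed

lemma integral_norm_xi:
  assumes "0 \<le> h"
  shows "(\<integral>w. norm (xi h w) \<partial>M) = (\<integral>w. norm (xi 0 w) \<partial>M)"
proof -
  have norm_measurable: "(\<lambda>v::'a. norm v) \<in> borel_measurable borel"
    by (intro borel_measurable_norm measurable_ident_sets refl)
  have "(\<integral>w. norm (xi h w) \<partial>M) = integral\<^sup>L (distr M borel (xi h)) norm"
    by (rule integral_distr[OF measurable_xi[OF assms] norm_measurable, symmetric])
  also have "\<dots> = integral\<^sup>L (distr M borel (xi 0)) norm" by (simp only: distr_xi[OF assms])
  also have "\<dots> = (\<integral>w. norm (xi 0 w) \<partial>M)"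
    by (rule integral_distr[OF measurable_xi[OF order.refl] norm_measurable])
  finally show ?thesis .
qed

definition block_sequence :: "('a \<Rightarrow> real) \<Rightarrow> 'w \<Rightarrow> nat \<Rightarrow> real" where
  "block_sequence \<phi> w = path_unit_integrals \<phi> (shifted_path 0 w)"

lemma measurable_block_sequence:
  "\<phi> \<in> borel_measurable borel \<Longrightarrow> block_sequence \<phi> \<in> M \<rightarrow>\<^sub>M seq_space"
  unfolding block_sequence_def
  using measurable_comp[OF measurable_shifted_path[of 0] measurable_path_unit_integrals[of \<phi>]]
  by (simp add: o_def)

lemma riemann_sum_shifted_path:
  "0 \<le> a \<Longrightarrow> riemann_sum \<phi> (shifted_path h w) a m = (\<Sum>j<m. \<phi> (xi (a + real j / real m + h) w)) / real m"
  unfolding riemann_sum_def shifted_path_def by simp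

lemma seq_shift_block_sequence: "seq_shift (block_sequence \<phi> w) = path_unit_integrals \<phi> (shifted_path 1 w)"
proof
  fix n
  have "riemann_sum \<phi> (shifted_path 0 w) (real (Suc n)) m = riemann_sum \<phi> (shifted_path 1 w) (real n) m"
    for m by (simp add: riemann_sum_shifted_path add_ac)
  then have "riemann_sum \<phi> (shifted_path 0 w) (real (Suc n)) = riemann_sum \<phi> (shifted_path 1 w) (real n)"
    by (rule ext)
  then show "seq_shift (block_sequence \<phi> w) n = path_unit_integrals \<phi> (shifted_path 1 w) n"
    by (simp add: seq_shift_def block_sequence_def path_unit_integrals_def)
qed

lemma tendsto_riemann_sum_shifted_path:
  assumes "w \<in> space M" and "continuous_on UNIV \<phi>"
  shows "riemann_sum \<phi> (shifted_path 0 w) (real n) \<longlonglongrightarrow> unit_integrals (\<lambda>s. \<phi> (xi s w)) n"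
proof -
  have "continuous_on {real n..real n + 1} (\<lambda>s. \<phi> (xi s w))"
    by (rule continuous_on_compose2[OF assms(2) continuous_on_subset[OF continuous_paths[OF assms(1)]]])
       auto
  moreover have "riemann_sum \<phi> (shifted_path 0 w) (real n)
      = (\<lambda>m. (\<Sum>j<m. \<phi> (xi (real n + real j / real m) w)) / real m)"
    by (rule ext) (simp add: riemann_sum_shifted_path)
  ultimately show ?thesis
    using tendsto_riemann_sum by (simp add: unit_integrals_def)
qed

lemma block_sequence_eq_unit_integrals:
  assumes "w \<in> space M" and "continuous_on UNIV \<phi>"
  shows "block_sequence \<phi> w = unit_integrals (\<lambda>s. \<phi> (xi s w))"
  unfolding block_sequence_def path_unit_integrals_def
  by (rule ext, rule limI, rule tendsto_riemann_sum_shifted_path[OF assms])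

lemma nn_integral_riemann_sum_le:
  assumes [measurable]: "\<phi> \<in> borel_measurable borel" and bound: "\<And>v. \<bar>\<phi> v\<bar> \<le> norm v"
  shows "(\<integral>\<^sup>+ w. ennreal \<bar>riemann_sum \<phi> (shifted_path 0 w) 0 m\<bar> \<partial>M) \<le> ennreal (\<integral>w. norm (xi 0 w) \<partial>M)"
proof -
  define T where "T w = (\<Sum>j<m. norm (xi (real j / real m) w)) / real m" for w
  have T_integrable: "integrable M T"
    unfolding T_def
    by (intro Bochner_Integration.integrable_divide Bochner_Integration.integrable_sum integrable_norm_xi) simp
  have "\<bar>riemann_sum \<phi> (shifted_path 0 w) 0 m\<bar> \<le> T w" for w
  proof -
    have "\<bar>\<Sum>j<m. \<phi> (xi (real j / real m) w)\<bar> \<le> (\<Sum>j<m. norm (xi (real j / real m) w))"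
      by (rule order.trans[OF sum_abs sum_mono]) (rule bound)
    then show ?thesis
      by (simp add: riemann_sum_shifted_path T_def abs_divide divide_right_mono)
  qed
  then have "(\<integral>\<^sup>+ w. ennreal \<bar>riemann_sum \<phi> (shifted_path 0 w) 0 m\<bar> \<partial>M) \<le> (\<integral>\<^sup>+ w. ennreal (T w) \<partial>M)"
    by (intro nn_integral_mono ennreal_leI)
  also have "\<dots> = ennreal (integral\<^sup>L M T)"
    unfolding T_def
    by (rule nn_integral_eq_integral[OF T_integrable[unfolded T_def]])
       (intro AE_I2 divide_nonneg_nonneg sum_nonneg norm_ge_zero of_nat_0_le_iff)
  also have "integral\<^sup>L M T = (\<Sum>j<m. (\<integral>w. norm (xi (real j / real m) w) \<partial>M)) / real m"
    unfolding T_def by (simp add: integrable_norm_xi)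
  also have "\<dots> = (if m = 0 then 0 else (\<integral>w. norm (xi 0 w) \<partial>M))"
    using integral_norm_xi[of "real j / real m" for j] by simp
  also have "\<dots> \<le> (\<integral>w. norm (xi 0 w) \<partial>M)" by simp
  finally show ?thesis by (simp add: ennreal_leI)
qed

lemma integrable_block_sequence_0:
  assumes [measurable]: "\<phi> \<in> borel_measurable borel" and "continuous_on UNIV \<phi>"
    and "\<And>v. \<bar>\<phi> v\<bar> \<le> norm v"
  shows "integrable M (\<lambda>w. block_sequence \<phi> w 0)"
proof (rule integrableI_bounded)
  show "(\<lambda>w. block_sequence \<phi> w 0) \<in> borel_measurable M"
    using measurable_comp[OF measurable_block_sequence[OF assms(1)] measurable_seq_component[of 0]]
    by (simp add: o_def)
  have "(\<integral>\<^sup>+ w. ennreal (norm (block_sequence \<phi> w 0)) \<partial>M)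
      = (\<integral>\<^sup>+ w. liminf (\<lambda>m. ennreal \<bar>riemann_sum \<phi> (shifted_path 0 w) 0 m\<bar>) \<partial>M)"
  proof (rule nn_integral_cong)
    fix w assume "w \<in> space M"
    then have "(\<lambda>m. ennreal \<bar>riemann_sum \<phi> (shifted_path 0 w) 0 m\<bar>) \<longlonglongrightarrow> ennreal \<bar>block_sequence \<phi> w 0\<bar>"
      using tendsto_riemann_sum_shifted_path[of w \<phi> 0] block_sequence_eq_unit_integrals[of w \<phi>] assms(2)
      by (auto intro!: tendsto_ennrealI tendsto_rabs)
    then have "liminf (\<lambda>m. ennreal \<bar>riemann_sum \<phi> (shifted_path 0 w) 0 m\<bar>) = ennreal \<bar>block_sequence \<phi> w 0\<bar>"
      by (rule lim_imp_Liminf[rotated]) simp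
    then show "ennreal (norm (block_sequence \<phi> w 0)) = liminf (\<lambda>m. ennreal \<bar>riemann_sum \<phi> (shifted_path 0 w) 0 m\<bar>)"
      by simp
  qed
  also have "\<dots> \<le> liminf (\<lambda>m. \<integral>\<^sup>+ w. ennreal \<bar>riemann_sum \<phi> (shifted_path 0 w) 0 m\<bar> \<partial>M)"
    using measurable_comp[OF measurable_shifted_path measurable_riemann_sum[OF assms(1)]]
    by (intro nn_integral_liminf) (simp add: o_def)
  also have "\<dots> \<le> ennreal (\<integral>w. norm (xi 0 w) \<partial>M)"
    using nn_integral_riemann_sum_le[OF assms(1,3)] by (intro Liminf_le) auto
  finally show "(\<integral>\<^sup>+ w. ennreal (norm (block_sequence \<phi> w 0)) \<partial>M) < \<infinity>"
    by (simp add: order.strict_trans1)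
qed

lemma stationary_sequence_block_sequence:
  assumes [measurable]: "\<phi> \<in> borel_measurable borel" and "continuous_on UNIV \<phi>"
    and "\<And>v. \<bar>\<phi> v\<bar> \<le> norm v"
  shows "stationary_sequence (distr M seq_space (block_sequence \<phi>))"
  unfolding stationary_sequence_def stationary_sequence_axioms_def
proof (intro conjI)
  note block_measurable = measurable_block_sequence[OF assms(1)]
  note unit_integrals_measurable = measurable_path_unit_integrals[OF assms(1)]
  show "prob_space (distr M seq_space (block_sequence \<phi>))"
    by (rule prob_space_distr[OF block_measurable])
  show "sets (distr M seq_space (block_sequence \<phi>)) = sets seq_space" by simp
  show "integrable (distr M seq_space (block_sequence \<phi>)) (\<lambda>y. y 0)"
    using integrable_block_sequence_0[OF assms] block_measurable
    by (simp add: integrable_distr_eq)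
  have "distr (distr M seq_space (block_sequence \<phi>)) seq_space seq_shift
      = distr M seq_space (seq_shift \<circ> block_sequence \<phi>)"
    by (rule distr_distr[OF measurable_seq_shift block_measurable])
  also have "seq_shift \<circ> block_sequence \<phi> = path_unit_integrals \<phi> \<circ> shifted_path 1"
    by (rule ext) (simp add: seq_shift_block_sequence)
  also have "distr M seq_space \<dots> = distr (distr M path_space (shifted_path 1)) seq_space (path_unit_integrals \<phi>)"
    by (rule distr_distr[symmetric, OF unit_integrals_measurable measurable_shifted_path]) simp
  also have "\<dots> = distr (distr M path_space (shifted_path 0)) seq_space (path_unit_integrals \<phi>)"
    by (simp only: distr_shifted_path[of 1])
  also have "\<dots> = distr M seq_space (block_sequence \<phi>)"
    unfolding block_sequence_def
    using distr_distr[OF unit_integrals_measurable measurable_shifted_path[OF order.refl]]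
    by (simp add: o_def)
  finally show "distr (distr M seq_space (block_sequence \<phi>)) seq_space seq_shift
      = distr M seq_space (block_sequence \<phi>)" .
qed

lemma AE_convergent_cesaro_mean_unit_integrals:
  assumes "\<phi> \<in> borel_measurable borel" and "continuous_on UNIV \<phi>"
    and "\<And>v. \<bar>\<phi> v\<bar> \<le> norm v"
  shows "AE w in M. convergent (cesaro_mean (unit_integrals (\<lambda>s. \<phi> (xi s w))))"
proof -
  interpret block: stationary_sequence "distr M seq_space (block_sequence \<phi>)"
    by (rule stationary_sequence_block_sequence[OF assms])
  have "AE w in M. convergent (cesaro_mean (block_sequence \<phi> w))"
    by (rule AE_distrD[OF measurable_block_sequence[OF assms(1)] block.birkhoff_ergodic])
  then show ?thesis
    by (rule AE_mp) (auto intro!: AE_I2 simp: block_sequence_eq_unit_integrals[OF _ assms(2)])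
qed

end

lemma tendsto_Sigma_if_convergent_cesaro_mean:
  fixes x :: "real \<Rightarrow> real ^ 'n"
  assumes cx: "continuous_on {0..} x"
    and avg: "\<And>i. convergent (cesaro_mean (unit_integrals (\<lambda>s. x s $ i)))"
    and abs_avg: "\<And>i. convergent (cesaro_mean (unit_integrals (\<lambda>s. \<bar>x s $ i\<bar>)))"
  obtains Q where "((\<lambda>t. integral {0..t} x /\<^sub>R t) \<longlongrightarrow> Q) at_top"
    and "\<And>is. ((\<lambda>t. Sigma x is t / t ^ length is) \<longlongrightarrow> 1 / fact (length is) * (\<Prod>i\<leftarrow>is. Q $ i)) at_top"
proof
  define Q :: "real ^ 'n" where "Q = (\<chi> i. lim (cesaro_mean (unit_integrals (\<lambda>s. x s $ i))))"
  have cxi: "continuous_on {0..} (\<lambda>s. x s $ i)" for i by (intro continuous_intros cx)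
  have component_avg: "((\<lambda>t. integral {0..t} (\<lambda>s. x s $ i) / t) \<longlongrightarrow> Q $ i) at_top" for i
    using avg[of i] abs_avg[of i] unfolding Q_def convergent_LIMSEQ_iff convergent_def
    by (auto intro: tendsto_integral_average_if_cesaro[OF cxi])
  have linear: "\<exists>C. \<forall>\<^sub>F t in at_top. integral {0..t} (\<lambda>s. \<bar>x s $ i\<bar>) \<le> C * t" for i
    by (rule integral_abs_le_linear_if_convergent_cesaro[OF cxi abs_avg])
  have "integral {0..t} x /\<^sub>R t = (\<chi> i. integral {0..t} (\<lambda>s. x s $ i) / t)" for t
    using integrable_on_Icc_if_continuous_on_atLeast[OF cx order.refl, of t]
    by (simp add: vec_eq_iff integral_component_eq_cart divide_inverse mult.commute)
  moreover have "((\<lambda>t. \<chi> i. integral {0..t} (\<lambda>s. x s $ i) / t) \<longlongrightarrow> (\<chi> i. Q $ i)) at_top"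
    by (rule tendsto_vec_lambda) (rule component_avg)
  ultimately show "((\<lambda>t. integral {0..t} x /\<^sub>R t) \<longlongrightarrow> Q) at_top" by simp
  fix "is" :: "'n list"
  have "((\<lambda>t. iter_int_rev x (rev is) t / t ^ length (rev is))
      \<longlongrightarrow> (\<Prod>i\<leftarrow>rev is. Q $ i) / fact (length (rev is))) at_top"
    by (rule tendsto_iter_int_rev[OF cx component_avg linear])
  moreover have "(\<Prod>i\<leftarrow>rev is. Q $ i) = (\<Prod>i\<leftarrow>is. Q $ i)"
    by (simp add: rev_map[symmetric] prod_list.rev)
  ultimately show "((\<lambda>t. Sigma x is t / t ^ length is) \<longlongrightarrow> 1 / fact (length is) * (\<Prod>i\<leftarrow>is. Q $ i)) at_top"
    by (simp add: Sigma_def)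
qed

theorem corollary2p5:
  fixes M :: "'w measure" and xi :: "real \<Rightarrow> 'w \<Rightarrow> real ^ 'd"
  assumes "prob_space M"
    and "\<And>t. t \<ge> 0 \<Longrightarrow> xi t \<in> borel_measurable M"
    and "\<And>w. w \<in> space M \<Longrightarrow> continuous_on {0..} (\<lambda>t. xi t w)"
    and "stationary_process M xi"
    and "integrable M (\<lambda>w. norm (xi 0 w))"
  shows "AE w in M. \<exists>Q :: real ^ 'd.
           ((\<lambda>t. integral {0..t} (\<lambda>s. xi s w) /\<^sub>R t) \<longlongrightarrow> Q) at_top \<and>
           (\<forall>is :: 'd list. is \<noteq> [] \<longrightarrow>
              ((\<lambda>t. Sigma (\<lambda>s. xi s w) is t / t ^ length is) \<longlongrightarrow>
                 (1 / fact (length is)) * (\<Prod>i\<leftarrow>is. Q $ i)) at_top)"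
proof -
  interpret continuous_stationary_process M xi
    by (rule continuous_stationary_process.intro) (use assms in \<open>auto simp: continuous_stationary_process_axioms_def\<close>)
  have component_bound: "\<bar>v $ i\<bar> \<le> norm v" for v :: "real ^ 'd" and i
    by (rule component_le_norm_cart)
  have "AE w in M. \<forall>i\<in>UNIV.
      convergent (cesaro_mean (unit_integrals (\<lambda>s. xi s w $ i))) \<and>
      convergent (cesaro_mean (unit_integrals (\<lambda>s. \<bar>xi s w $ i\<bar>)))"
    using component_bound
    by (intro AE_finite_allI AE_conjI AE_convergent_cesaro_mean_unit_integrals)
       (auto intro!: continuous_intros)
  then show ?thesis
  proof (rule AE_mp, intro AE_I2 impI)
    fix w assume "w \<in> space M"
      and "\<forall>i\<in>UNIV. convergent (cesaro_mean (unit_integrals (\<lambda>s. xi s w $ i))) \<and>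
        convergent (cesaro_mean (unit_integrals (\<lambda>s. \<bar>xi s w $ i\<bar>)))"
    then obtain Q where "((\<lambda>t. integral {0..t} (\<lambda>s. xi s w) /\<^sub>R t) \<longlongrightarrow> Q) at_top"
      and "\<And>is. ((\<lambda>t. Sigma (\<lambda>s. xi s w) is t / t ^ length is)
          \<longlongrightarrow> 1 / fact (length is) * (\<Prod>i\<leftarrow>is. Q $ i)) at_top"
      using tendsto_Sigma_if_convergent_cesaro_mean[OF continuous_paths] by blast
    then show "\<exists>Q :: real ^ 'd. ((\<lambda>t. integral {0..t} (\<lambda>s. xi s w) /\<^sub>R t) \<longlongrightarrow> Q) at_top \<and>
        (\<forall>is :: 'd list. is \<noteq> [] \<longrightarrow> ((\<lambda>t. Sigma (\<lambda>s. xi s w) is t / t ^ length is)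
          \<longlongrightarrow> 1 / fact (length is) * (\<Prod>i\<leftarrow>is. Q $ i)) at_top)"
      by blast
  qed
qed

end
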